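(* Let $\sigma$ be a signature including $\{\triangleright, ;\}$ and let $\mathcal{A}$ be a $\sigma$-algebra that is representable by partial functions and whose atoms are separating. Let $\varphi$ be the first-order sentence asserting: for all $a,b,c$, if $c\ge a;x$ for every atom $x$ with $x\le b$, then $c\ge a;b$. Then composition in $\mathcal{A}$ is completely left-distributive over joins if and only if $\mathcal{A}\models\varphi$.
   Context: Signatures $\sigma$ are sets of operation symbols drawn from: $\triangleright$ (antidomain restriction), $;$ (composition), $\wedge$ (intersection), $\mathrm{upd}$ (update), $\sqcup$ (preferential union), $\mathsf{D}$ (domain), $\mathsf{A}$ (antidomain), interpreted on partial functions as: $f \triangleright g = \{(x,y) \in g : x \notin \mathrm{dom}(f)\}$; $f;g=\{(x,z):\exists y\,((x,y)\in f,(y,z)\in g)\}$; $f\wedge g = f\cap g$; $\mathrm{upd}(f,g)(x)$ is $f(x)$ if $f(x)$ defined and $g(x)$ undefined, $g(x)$ if both defined, undefined otherwise; $(f\sqcup g)(x)$ is $f(x)$ if defined, else $g(x)$; $\mathsf{D}(f)$ = identity on $\mathrm{dom}(f)$; $\mathsf{A}(f)$ = identity on the complement of $\mathrm{dom}(f)$ in the base. $\mathcal{A}$ is representable if isomorphic to a $\sigma$-algebra of partial functions with these operations. Define $0 := a\triangleright a$, $a\lhd b := (a\triangleright b)\triangleright b$, $a \le b :\iff a\lhd b = a$. An atom is a minimal nonzero element (expressible in first-order logic); atoms are separating if whenever $a\not\le b$ there is an atom $c\le a$ with $c\not\le b$. Composition is completely left-distributive over joins if for every $S$ with $\bigvee S$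 existing and every $a$, $\bigvee\{a;s:s\in S\}$ exists and equals $a;\bigvee S$. *)

theory Defs
  imports Main
begin

datatype opsym = ARes | Comp | Meet | Upd | Pref | DomOp | ADomOp

type_synonym signature = "opsym set"

text \<open>An algebra carrying (interpretations of) all possible operations;
  only those in the signature matter.\<close>
record 'a alg =
  carrier :: "'a set"
  ares :: "'a \<Rightarrow> 'a \<Rightarrow> 'a"
  comp :: "'a \<Rightarrow> 'a \<Rightarrow> 'a"
  meet :: "'a \<Rightarrow> 'a \<Rightarrow> 'a"
  upd  :: "'a \<Rightarrow> 'a \<Rightarrow> 'a"
  pref :: "'a \<Rightarrow> 'a \<Rightarrow> 'a"
  domo :: "'a \<Rightarrow> 'a"
  adomo :: "'a \<Rightarrow> 'a"

definition sig_algebra :: "signature \<Rightarrow> 'a alg \<Rightarrow> bool" where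
  "sig_algebra \<sigma> A \<longleftrightarrow> carrier A \<noteq> {} \<and>
     (\<forall>a\<in>carrier A. \<forall>b\<in>carrier A.
        (ARes \<in> \<sigma> \<longrightarrow> ares A a b \<in> carrier A) \<and>
        (Comp \<in> \<sigma> \<longrightarrow> comp A a b \<in> carrier A) \<and>
        (Meet \<in> \<sigma> \<longrightarrow> meet A a b \<in> carrier A) \<and>
        (Upd \<in> \<sigma> \<longrightarrow> upd A a b \<in> carrier A) \<and>
        (Pref \<in> \<sigma> \<longrightarrow> pref A a b \<in> carrier A) \<and>
        (DomOp \<in> \<sigma> \<longrightarrow> domo A a \<in> carrier A) \<and>
        (ADomOp \<in> \<sigma> \<longrightarrow> adomo A a \<in> carrier A))"

definition pf_ares :: "('b \<rightharpoonup> 'b) \<Rightarrow> ('b \<rightharpoonup> 'b) \<Rightarrow> ('b \<rightharpoonup> 'b)" where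
  "pf_ares f g = (\<lambda>x. if x \<in> dom f then None else g x)"

definition pf_comp :: "('b \<rightharpoonup> 'b) \<Rightarrow> ('b \<rightharpoonup> 'b) \<Rightarrow> ('b \<rightharpoonup> 'b)" where
  "pf_comp f g = (\<lambda>x. case f x of None \<Rightarrow> None | Some y \<Rightarrow> g y)"

definition pf_meet :: "('b \<rightharpoonup> 'b) \<Rightarrow> ('b \<rightharpoonup> 'b) \<Rightarrow> ('b \<rightharpoonup> 'b)" where
  "pf_meet f g = (\<lambda>x. if f x = g x then f x else None)"

definition pf_upd :: "('b \<rightharpoonup> 'b) \<Rightarrow> ('b \<rightharpoonup> 'b) \<Rightarrow> ('b \<rightharpoonup> 'b)" where
  "pf_upd f g = (\<lambda>x. if f x = None then None else if g x = None then f x else g x)"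

definition pf_pref :: "('b \<rightharpoonup> 'b) \<Rightarrow> ('b \<rightharpoonup> 'b) \<Rightarrow> ('b \<rightharpoonup> 'b)" where
  "pf_pref f g = (\<lambda>x. case f x of Some y \<Rightarrow> Some y | None \<Rightarrow> g x)"

definition pf_dom :: "('b \<rightharpoonup> 'b) \<Rightarrow> ('b \<rightharpoonup> 'b)" where
  "pf_dom f = (\<lambda>x. if x \<in> dom f then Some x else None)"

definition pf_adom :: "'b set \<Rightarrow> ('b \<rightharpoonup> 'b) \<Rightarrow> ('b \<rightharpoonup> 'b)" where
  "pf_adom X f = (\<lambda>x. if x \<in> X \<and> x \<notin> dom f then Some x else None)"

definition representation ::
    "signature \<Rightarrow> 'a alg \<Rightarrow> 'b set \<Rightarrow> ('a \<Rightarrow> ('b \<rightharpoonup> 'b)) \<Rightarrow> bool" where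
  "representation \<sigma> A X h \<longleftrightarrow>
     inj_on h (carrier A) \<and>
     (\<forall>a\<in>carrier A. dom (h a) \<subseteq> X \<and> ran (h a) \<subseteq> X) \<and>
     (\<forall>a\<in>carrier A. \<forall>b\<in>carrier A.
        (ARes \<in> \<sigma> \<longrightarrow> h (ares A a b) = pf_ares (h a) (h b)) \<and>
        (Comp \<in> \<sigma> \<longrightarrow> h (comp A a b) = pf_comp (h a) (h b)) \<and>
        (Meet \<in> \<sigma> \<longrightarrow> h (meet A a b) = pf_meet (h a) (h b)) \<and>
        (Upd \<in> \<sigma> \<longrightarrow> h (upd A a b) = pf_upd (h a) (h b)) \<and>
        (Pref \<in> \<sigma> \<longrightarrow> h (pref A a b) = pf_pref (h a) (h b)) \<and>
        (DomOp \<in> \<sigma> \<longrightarrow> h (domo A a) = pf_dom (h a)) \<and>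
        (ADomOp \<in> \<sigma> \<longrightarrow> h (adomo A a) = pf_adom X (h a)))"

text \<open>Representability with base set drawn from a type 'b; since 'b is a free
  type variable in the theorem, this covers every possible base set.\<close>
definition representable_over :: "'b itself \<Rightarrow> signature \<Rightarrow> 'a alg \<Rightarrow> bool" where
  "representable_over _ \<sigma> A \<longleftrightarrow> (\<exists>(X::'b set) h. representation \<sigma> A X h)"

definition zero :: "'a alg \<Rightarrow> 'a" where
  "zero A = (let a = (SOME a. a \<in> carrier A) in ares A a a)"

definition rres :: "'a alg \<Rightarrow> 'a \<Rightarrow> 'a \<Rightarrow> 'a" where
  "rres A a b = ares A (ares A a b) b"

definition leq :: "'a alg \<Rightarrow> 'a \<Rightarrow> 'a \<Rightarrow> bool" where
  "leq A a b \<longleftrightarrow> rres A a b = a"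

definition atom :: "'a alg \<Rightarrow> 'a \<Rightarrow> bool" where
  "atom A x \<longleftrightarrow> x \<in> carrier A \<and> x \<noteq> zero A \<and>
     (\<forall>y\<in>carrier A. leq A y x \<and> y \<noteq> zero A \<longrightarrow> y = x)"

definition atoms_separating :: "'a alg \<Rightarrow> bool" where
  "atoms_separating A \<longleftrightarrow>
     (\<forall>a\<in>carrier A. \<forall>b\<in>carrier A. \<not> leq A a b \<longrightarrow>
        (\<exists>c. atom A c \<and> leq A c a \<and> \<not> leq A c b))"

definition is_join :: "'a alg \<Rightarrow> 'a set \<Rightarrow> 'a \<Rightarrow> bool" where
  "is_join A S j \<longleftrightarrow> j \<in> carrier A \<and> (\<forall>s\<in>S. leq A s j) \<and>
     (\<forall>u\<in>carrier A. (\<forall>s\<in>S. leq A s u) \<longrightarrow> leq A j u)"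

definition comp_cld :: "'a alg \<Rightarrow> bool" where
  "comp_cld A \<longleftrightarrow>
     (\<forall>S j. S \<subseteq> carrier A \<and> is_join A S j \<longrightarrow>
        (\<forall>a\<in>carrier A. is_join A ((\<lambda>s. comp A a s) ` S) (comp A a j)))"

definition phi :: "'a alg \<Rightarrow> bool" where
  "phi A \<longleftrightarrow>
     (\<forall>a\<in>carrier A. \<forall>b\<in>carrier A. \<forall>c\<in>carrier A.
        (\<forall>x. atom A x \<and> leq A x b \<longrightarrow> leq A (comp A a x) c) \<longrightarrow>
        leq A (comp A a b) c)"

end

theory Submission
  imports Defs
begin

text \<open>In a representation the derived order \<open>a \<le> b\<close> is inclusion of partial functions,
  since \<open>a \<lhd> b\<close> is \<open>b\<close> restricted to the domain of \<open>a\<close>. One direction needs no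
  representation: by separation every \<open>b\<close> is the join of the atoms below it, so complete
  left-distributivity applied to that join yields \<open>\<phi>\<close>. Conversely, an atom \<open>x\<close> below a join
  \<open>j = \<Or>S\<close> lies below some member of \<open>S\<close>: restricting \<open>s \<in> S\<close> to the domain of \<open>x\<close> gives \<open>0\<close>
  or \<open>x\<close>, and if it is always \<open>0\<close> then \<open>x \<triangleright> j\<close> is an upper bound of \<open>S\<close> strictly below \<open>j\<close>.
  Hence \<open>a;x \<le> a;s\<close>, and \<open>\<phi>\<close> turns the bound on all \<open>a;x\<close> into the bound on \<open>a;j\<close>.\<close>

lemma join_of_atoms_below:
  assumes "atoms_separating A" and "b \<in> carrier A"
  shows "is_join A {x. atom A x \<and> leq A x b} b"
  using assms unfolding is_join_def atoms_separating_def by blast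

lemma comp_cld_imp_phi:
  assumes "atoms_separating A" and "comp_cld A"
  shows "phi A"
  unfolding phi_def
proof (intro ballI impI)
  fix a b c
  assume a: "a \<in> carrier A" and b: "b \<in> carrier A" and c: "c \<in> carrier A"
    and below_c: "\<forall>x. atom A x \<and> leq A x b \<longrightarrow> leq A (comp A a x) c"
  let ?S = "{x. atom A x \<and> leq A x b}"
  have "?S \<subseteq> carrier A" unfolding atom_def by blast
  then have "is_join A ((\<lambda>s. comp A a s) ` ?S) (comp A a b)"
    using assms a join_of_atoms_below[OF assms(1) b] unfolding comp_cld_def by blast
  then show "leq A (comp A a b) c"
    using below_c c unfolding is_join_def by blast
qed

lemma pf_ares_pf_ares: "pf_ares (pf_ares f g) g = (\<lambda>x. if x \<in> dom f then g x else None)"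
  by (auto simp: pf_ares_def fun_eq_iff dom_def)

lemma restrict_dom_eq_iff_map_le:
  "(\<lambda>x. if x \<in> dom f then g x else None) = f \<longleftrightarrow> f \<subseteq>\<^sub>m g"
  by (auto simp: map_le_def fun_eq_iff dom_def split: if_splits)

lemma pf_comp_mono: "f \<subseteq>\<^sub>m g \<Longrightarrow> pf_comp a f \<subseteq>\<^sub>m pf_comp a g"
  by (auto simp: map_le_def pf_comp_def dom_def split: option.splits)

locale ares_comp_representation =
  fixes \<sigma> :: signature and A :: "'a alg" and X :: "'b set" and h :: "'a \<Rightarrow> 'b \<rightharpoonup> 'b"
  assumes sig: "{ARes, Comp} \<subseteq> \<sigma>"
    and algebra: "sig_algebra \<sigma> A"
    and rep: "representation \<sigma> A X h"
begin

lemma inj: "inj_on h (carrier A)"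
  using rep unfolding representation_def by blast

lemma ares_closed: "a \<in> carrier A \<Longrightarrow> b \<in> carrier A \<Longrightarrow> ares A a b \<in> carrier A"
  using sig algebra unfolding sig_algebra_def by blast

lemma comp_closed: "a \<in> carrier A \<Longrightarrow> b \<in> carrier A \<Longrightarrow> comp A a b \<in> carrier A"
  using sig algebra unfolding sig_algebra_def by blast

lemma rres_closed: "a \<in> carrier A \<Longrightarrow> b \<in> carrier A \<Longrightarrow> rres A a b \<in> carrier A"
  unfolding rres_def by (intro ares_closed)

lemma h_ares: "a \<in> carrier A \<Longrightarrow> b \<in> carrier A \<Longrightarrow> h (ares A a b) = pf_ares (h a) (h b)"
  using rep sig unfolding representation_def by blast

lemma h_comp: "a \<in> carrier A \<Longrightarrow> b \<in> carrier A \<Longrightarrow> h (comp A a b) = pf_comp (h a) (h b)"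
  using rep sig unfolding representation_def by blast

lemma h_rres:
  "a \<in> carrier A \<Longrightarrow> b \<in> carrier A \<Longrightarrow>
    h (rres A a b) = (\<lambda>x. if x \<in> dom (h a) then h b x else None)"
  unfolding rres_def by (simp add: h_ares ares_closed pf_ares_pf_ares)

lemma leq_iff_map_le:
  assumes "a \<in> carrier A" and "b \<in> carrier A"
  shows "leq A a b \<longleftrightarrow> h a \<subseteq>\<^sub>m h b"
proof -
  have "leq A a b \<longleftrightarrow> h (rres A a b) = h a"
    unfolding leq_def using inj assms rres_closed by (metis inj_on_eq_iff)
  then show ?thesis
    using h_rres[OF assms] restrict_dom_eq_iff_map_le by metis
qed

lemma zero_closed: "zero A \<in> carrier A"
  and h_zero: "h (zero A) = Map.empty"
proof -
  have "(SOME a. a \<in> carrier A) \<in> carrier A"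
    using algebra unfolding sig_algebra_def by (simp add: some_in_eq)
  then show "zero A \<in> carrier A" "h (zero A) = Map.empty"
    unfolding zero_def Let_def
    by (simp_all add: ares_closed h_ares pf_ares_def fun_eq_iff domIff)
qed

lemma atom_nonempty: "atom A x \<Longrightarrow> h x \<noteq> Map.empty"
  using inj zero_closed h_zero unfolding atom_def by (metis inj_on_eq_iff)

lemma atom_dom_disjoint_or_subset:
  assumes x: "atom A x" and s: "s \<in> carrier A"
  shows "dom (h s) \<inter> dom (h x) = {} \<or> dom (h x) \<subseteq> dom (h s)"
proof -
  have xA: "x \<in> carrier A" using x unfolding atom_def by blast
  have "h (rres A s x) \<subseteq>\<^sub>m h x"
    by (auto simp: h_rres[OF s xA] map_le_def dom_def)
  then have "leq A (rres A s x) x"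
    using leq_iff_map_le rres_closed s xA by blast
  then have "rres A s x = zero A \<or> rres A s x = x"
    using x rres_closed[OF s xA] unfolding atom_def by blast
  then show ?thesis
  proof
    assume "rres A s x = zero A"
    then have "\<forall>y. (if y \<in> dom (h s) then h x y else None) = None"
      using h_rres[OF s xA] h_zero by metis
    then show ?thesis by (auto split: if_splits)
  next
    assume "rres A s x = x"
    then have "\<forall>y. (if y \<in> dom (h s) then h x y else None) = h x y"
      using h_rres[OF s xA] by metis
    then show ?thesis by (force split: if_splits)
  qed
qed

lemma atom_below_join_below_member:
  assumes S: "S \<subseteq> carrier A" and J: "is_join A S j"
    and x: "atom A x" and xj: "leq A x j"
  shows "\<exists>s\<in>S. leq A x s"
proof (rule ccontr)
  assume none: "\<not> (\<exists>s\<in>S. leq A x s)"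
  have j: "j \<in> carrier A" and xA: "x \<in> carrier A"
    using J x unfolding is_join_def atom_def by blast+
  have hxj: "h x \<subseteq>\<^sub>m h j" using leq_iff_map_le xA j xj by blast
  have hsj: "h s \<subseteq>\<^sub>m h j" if "s \<in> S" for s
    using J S that j leq_iff_map_le unfolding is_join_def by blast
  have disjoint: "dom (h s) \<inter> dom (h x) = {}" if s: "s \<in> S" for s
  proof -
    have "h x \<subseteq>\<^sub>m h s" if "dom (h x) \<subseteq> dom (h s)"
      using that hxj hsj[OF s] unfolding map_le_def by (metis subsetD)
    then show ?thesis
      using atom_dom_disjoint_or_subset[OF x] s S none leq_iff_map_le xA by blast
  qed
  define j' where "j' = ares A x j"
  have j': "j' \<in> carrier A" and h_j': "h j' = pf_ares (h x) (h j)"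
    unfolding j'_def using ares_closed h_ares xA j by blast+
  have "leq A s j'" if s: "s \<in> S" for s
  proof -
    have "h s \<subseteq>\<^sub>m h j'"
      using hsj[OF s] disjoint[OF s] by (auto simp: h_j' map_le_def pf_ares_def)
    then show ?thesis using leq_iff_map_le s S j' by blast
  qed
  then have "h j \<subseteq>\<^sub>m h j'"
    using J j j' leq_iff_map_le unfolding is_join_def by blast
  moreover obtain y v where y: "h x y = Some v"
    using atom_nonempty[OF x] by (metis not_Some_eq ext)
  then have "h j y = Some v" using hxj unfolding map_le_def by (metis domI)
  ultimately show False
    using y unfolding h_j' map_le_def pf_ares_def by (metis domI option.distinct(1))
qed

lemma comp_mono: "a \<in> carrier A \<Longrightarrow> s \<in> carrier A \<Longrightarrow> t \<in> carrier A \<Longrightarrow>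
    leq A s t \<Longrightarrow> leq A (comp A a s) (comp A a t)"
  using leq_iff_map_le comp_closed h_comp pf_comp_mono by metis

lemma leq_trans: "a \<in> carrier A \<Longrightarrow> b \<in> carrier A \<Longrightarrow> c \<in> carrier A \<Longrightarrow>
    leq A a b \<Longrightarrow> leq A b c \<Longrightarrow> leq A a c"
  using leq_iff_map_le map_le_trans by metis

lemma phi_imp_comp_cld:
  assumes phi: "phi A"
  shows "comp_cld A"
  unfolding comp_cld_def
proof (intro allI impI ballI)
  fix S j a
  assume "S \<subseteq> carrier A \<and> is_join A S j" and a: "a \<in> carrier A"
  then have S: "S \<subseteq> carrier A" and J: "is_join A S j" by auto
  have j: "j \<in> carrier A" using J unfolding is_join_def by blast
  show "is_join A ((\<lambda>s. comp A a s) ` S) (comp A a j)"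
    unfolding is_join_def
  proof (intro conjI ballI impI)
    show "comp A a j \<in> carrier A" using comp_closed a j by blast
    show "\<And>t. t \<in> (\<lambda>s. comp A a s) ` S \<Longrightarrow> leq A t (comp A a j)"
      using J S a j comp_mono unfolding is_join_def by blast
    fix u
    assume u: "u \<in> carrier A" and bound: "\<forall>t\<in>(\<lambda>s. comp A a s) ` S. leq A t u"
    have "leq A (comp A a x) u" if x: "atom A x" "leq A x j" for x
    proof -
      obtain s where s: "s \<in> S" "leq A x s"
        using atom_below_join_below_member[OF S J x] by blast
      have "x \<in> carrier A" using x unfolding atom_def by blast
      then show ?thesis
        using comp_mono[OF a _ _ s(2)] bound s S leq_trans comp_closed a u by blast
    qed
    then show "leq A (comp A a j) u" using phi a j u unfolding phi_def by blast
  qed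
qed

end

theorem lemma7p3:
  fixes \<sigma> :: signature and A :: "'a alg"
  assumes "{ARes, Comp} \<subseteq> \<sigma>"
    and "sig_algebra \<sigma> A"
    and "representable_over TYPE('b) \<sigma> A"
    and "atoms_separating A"
  shows "comp_cld A \<longleftrightarrow> phi A"
proof -
  obtain X :: "'b set" and h where "representation \<sigma> A X h"
    using assms(3) unfolding representable_over_def by blast
  then interpret ares_comp_representation \<sigma> A X h
    using assms(1,2) by unfold_locales
  show ?thesis
    using comp_cld_imp_phi[OF assms(4)] phi_imp_comp_cld by blast
qed

end
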